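(* Let $H$ be a separable Hilbert space, $(\Omega,\mathcal{A},\mu)$ a measure space, and $V:H\to L^2_\mu(\Omega)$ an invertible bounded linear operator. Let $G:=V^{\mathsf{T}}V$ and let $d$ be the metric on $H$ given by $$d(x_1,x_2)^2:=\inf_{\gamma\in\Gamma(x_1,x_2)}\int_0^1\langle G\dot\gamma(s),\dot\gamma(s)\rangle_H\,\mathrm{d}s.$$ Let $\mathcal{F}:H\to\mathbb{R}$ be $\tilde\lambda$-convex on $H$ for some $\tilde\lambda\in\mathbb{R}$. Then $\mathcal{F}$ is geodesically $\lambda$-convex with respect to $d$, where $\lambda:=\tilde\lambda\|V\|^{-2}$ if $\tilde\lambda>0$ and $\lambda:=\tilde\lambda\|V^{-1}\|^2$ if $\tilde\lambda\le0$.
   Context: $V^{\mathsf{T}}$ is the Hilbert-space adjoint of $V$; $\|V\|$ and $\|V^{-1}\|$ are the operator norms in $L(H,L^2_\mu(\Omega))$ and $L(L^2_\mu(\Omega),H)$. $\Gamma(x_1,x_2)$ is the set of curves $\gamma\in C^1([0,1],H)$ with $\gamma(0)=x_1,\gamma(1)=x_2$. $\tilde\lambda$-convexity on $H$ means $\mathcal{F}((1-\theta)x_1+\theta x_2)\le(1-\theta)\mathcal{F}(x_1)+\theta\mathcal{F}(x_2)-\tilde\lambda\frac{\theta(1-\theta)}{2}\|x_1-x_2\|_H^2$ for all $x_1,x_2\in H$, $\theta\in[0,1]$. Geodesic $\lambda$-convexity w.r.t. $d$ means: for every constant-speed geodesic $\gamma:[0,1]\to H$ of $(H,d)$ and every $\theta\in[0,1]$,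 $\mathcal{F}(\gamma(\theta))\le(1-\theta)\mathcal{F}(\gamma(0))+\theta\mathcal{F}(\gamma(1))-\lambda\frac{\theta(1-\theta)}{2}d(\gamma(0),\gamma(1))^2$. *)

theory Defs
  imports "HOL-Analysis.Analysis" "HOL-Probability.Probability"
begin

text \<open>Square-integrable real functions on a measure space (representatives of L^2_mu).\<close>
definition sq_int :: "'w measure \<Rightarrow> ('w \<Rightarrow> real) \<Rightarrow> bool" where
  "sq_int M f \<longleftrightarrow> f \<in> borel_measurable M \<and> integrable M (\<lambda>w. (f w)\<^sup>2)"

definition L2_inner :: "'w measure \<Rightarrow> ('w \<Rightarrow> real) \<Rightarrow> ('w \<Rightarrow> real) \<Rightarrow> real" where
  "L2_inner M f g = (\<integral>w. f w * g w \<partial>M)"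

definition L2_norm :: "'w measure \<Rightarrow> ('w \<Rightarrow> real) \<Rightarrow> real" where
  "L2_norm M f = sqrt (\<integral>w. (f w)\<^sup>2 \<partial>M)"

definition bounded_linear_L2 :: "'w measure \<Rightarrow> ('a::real_normed_vector \<Rightarrow> 'w \<Rightarrow> real) \<Rightarrow> bool" where
  "bounded_linear_L2 M V \<longleftrightarrow>
     (\<forall>x. sq_int M (V x)) \<and>
     (\<forall>x y. \<forall>w\<in>space M. V (x + y) w = V x w + V y w) \<and>
     (\<forall>c x. \<forall>w\<in>space M. V (c *\<^sub>R x) w = c * V x w) \<and>
     (\<exists>K. \<forall>x. L2_norm M (V x) \<le> K * norm x)"

definition inverse_L2 :: "'w measure \<Rightarrow> ('a::real_normed_vector \<Rightarrow> 'w \<Rightarrow> real)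
     \<Rightarrow> (('w \<Rightarrow> real) \<Rightarrow> 'a) \<Rightarrow> bool" where
  "inverse_L2 M V W \<longleftrightarrow>
     (\<forall>f g. sq_int M f \<longrightarrow> sq_int M g \<longrightarrow> (AE w in M. f w = g w) \<longrightarrow> W f = W g) \<and>
     (\<forall>f g. sq_int M f \<longrightarrow> sq_int M g \<longrightarrow> W (\<lambda>w. f w + g w) = W f + W g) \<and>
     (\<forall>c f. sq_int M f \<longrightarrow> W (\<lambda>w. c * f w) = c *\<^sub>R W f) \<and>
     (\<exists>K. \<forall>f. sq_int M f \<longrightarrow> norm (W f) \<le> K * L2_norm M f) \<and>
     (\<forall>x. W (V x) = x) \<and>
     (\<forall>f. sq_int M f \<longrightarrow> (AE w in M. V (W f) w = f w))"

definition opnorm_V :: "'w measure \<Rightarrow> ('a::real_normed_vector \<Rightarrow> 'w \<Rightarrow> real) \<Rightarrow> real" where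
  "opnorm_V M V = Sup {L2_norm M (V x) | x. norm x \<le> 1}"

definition opnorm_W :: "'w measure \<Rightarrow> (('w \<Rightarrow> real) \<Rightarrow> 'a::real_normed_vector) \<Rightarrow> real" where
  "opnorm_W M W = Sup {norm (W f) | f. sq_int M f \<and> L2_norm M f \<le> 1}"

definition C1_curves :: "'a::real_normed_vector \<Rightarrow> 'a \<Rightarrow> (real \<Rightarrow> 'a) set" where
  "C1_curves x1 x2 = {\<gamma>. (\<exists>\<gamma>'. (\<forall>s\<in>{0..1}. (\<gamma> has_vector_derivative \<gamma>' s) (at s within {0..1}))
                              \<and> continuous_on {0..1} \<gamma>')
                        \<and> \<gamma> 0 = x1 \<and> \<gamma> 1 = x2}"

definition energy :: "('a::real_inner \<Rightarrow> 'a) \<Rightarrow> (real \<Rightarrow> 'a) \<Rightarrow> real" where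
  "energy G \<gamma> = integral {0..1} (\<lambda>s. inner (G (vector_derivative \<gamma> (at s within {0..1})))
                                          (vector_derivative \<gamma> (at s within {0..1})))"

definition G_dist :: "('a::real_inner \<Rightarrow> 'a) \<Rightarrow> 'a \<Rightarrow> 'a \<Rightarrow> real" where
  "G_dist G x1 x2 = sqrt (Inf (energy G ` C1_curves x1 x2))"

definition cs_geodesic :: "('a \<Rightarrow> 'a \<Rightarrow> real) \<Rightarrow> (real \<Rightarrow> 'a) \<Rightarrow> bool" where
  "cs_geodesic d \<gamma> \<longleftrightarrow>
     (\<forall>s\<in>{0..1}. \<forall>t\<in>{0..1}. d (\<gamma> s) (\<gamma> t) = \<bar>t - s\<bar> * d (\<gamma> 0) (\<gamma> 1))"

definition lambda_convex :: "real \<Rightarrow> ('a::real_normed_vector \<Rightarrow> real) \<Rightarrow> bool" where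
  "lambda_convex l F \<longleftrightarrow>
     (\<forall>x1 x2. \<forall>\<theta>\<in>{0..1}. F ((1 - \<theta>) *\<^sub>R x1 + \<theta> *\<^sub>R x2)
        \<le> (1 - \<theta>) * F x1 + \<theta> * F x2 - l * \<theta> * (1 - \<theta>) / 2 * (norm (x1 - x2))\<^sup>2)"

definition geod_lambda_convex :: "('a \<Rightarrow> 'a \<Rightarrow> real) \<Rightarrow> real \<Rightarrow> ('a \<Rightarrow> real) \<Rightarrow> bool" where
  "geod_lambda_convex d l F \<longleftrightarrow>
     (\<forall>\<gamma>. cs_geodesic d \<gamma> \<longrightarrow> (\<forall>\<theta>\<in>{0..1}. F (\<gamma> \<theta>)
        \<le> (1 - \<theta>) * F (\<gamma> 0) + \<theta> * F (\<gamma> 1) - l * \<theta> * (1 - \<theta>) / 2 * (d (\<gamma> 0) (\<gamma> 1))\<^sup>2))"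

end

(*
  For the constant metric tensor G = V^T V, every C^1 curve from x1 to x2 has energy at least
  <G (x2 - x1), x2 - x1>: by the fundamental theorem of calculus the derivative averages to
  x2 - x1, and positivity of G bounds 2 <G gamma', e> - <G e, e> by <G gamma', gamma'>. The
  segment attains this bound, so d(x1, x2) = ||V (x2 - x1)||, a Hilbert norm because V is
  injective. In such a norm equality in the triangle inequality forces collinearity, so the
  constant-speed geodesics are exactly the affine segments, and geodesic convexity reduces to
  lambda~-convexity along segments. The moduli are then compared through
  ||V v|| <= ||V|| ||v|| and ||v|| <= ||V^-1|| ||V v||.
*)
theory Submission
  imports Defs
begin

lemma sq_int_integrable_mult:
  assumes "sq_int M f" "sq_int M g"
  shows "integrable M (\<lambda>w. f w * g w)"
proof (rule Bochner_Integration.integrable_bound)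
  show "integrable M (\<lambda>w. (f w)\<^sup>2 + (g w)\<^sup>2)"
    using assms unfolding sq_int_def by auto
  show "(\<lambda>w. f w * g w) \<in> borel_measurable M"
    using assms unfolding sq_int_def by auto
  have "\<bar>a * b\<bar> \<le> a\<^sup>2 + b\<^sup>2" for a b :: real
    using sum_squares_bound[of "\<bar>a\<bar>" "\<bar>b\<bar>"] mult_nonneg_nonneg[of "\<bar>a\<bar>" "\<bar>b\<bar>"]
    unfolding abs_mult power2_abs by linarith
  then show "AE w in M. norm (f w * g w) \<le> norm ((f w)\<^sup>2 + (g w)\<^sup>2)"
    by simp
qed

lemma sq_int_cmult: "sq_int M f \<Longrightarrow> sq_int M (\<lambda>w. c * f w)"
  unfolding sq_int_def by (auto simp: power_mult_distrib)

lemma L2_norm_nonneg: "0 \<le> L2_norm M f"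
  unfolding L2_norm_def by simp

lemma L2_norm_cmult: "L2_norm M (\<lambda>w. c * f w) = \<bar>c\<bar> * L2_norm M f"
  unfolding L2_norm_def by (simp add: power_mult_distrib real_sqrt_mult)

lemma L2_norm_eq_0_imp_AE_zero:
  assumes "sq_int M f" "L2_norm M f = 0"
  shows "AE w in M. f w = 0"
proof -
  have "(\<integral>w. (f w)\<^sup>2 \<partial>M) = 0"
    using assms(2) unfolding L2_norm_def by simp
  then have "AE w in M. (f w)\<^sup>2 = 0"
    using assms(1) unfolding sq_int_def by (subst (asm) integral_nonneg_eq_0_iff_AE) auto
  then show ?thesis by simp
qed

lemma bounded_linear_L2_sq_int: "bounded_linear_L2 M V \<Longrightarrow> sq_int M (V x)"
  unfolding bounded_linear_L2_def by blast

lemma L2_norm_V_scaleR: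
  assumes "bounded_linear_L2 M V"
  shows "L2_norm M (V (c *\<^sub>R x)) = \<bar>c\<bar> * L2_norm M (V x)"
proof -
  have "L2_norm M (V (c *\<^sub>R x)) = L2_norm M (\<lambda>w. c * V x w)"
    unfolding L2_norm_def using assms unfolding bounded_linear_L2_def
    by (simp cong: Bochner_Integration.integral_cong)
  then show ?thesis by (simp add: L2_norm_cmult)
qed

lemma L2_norm_V_le_opnorm:
  assumes V: "bounded_linear_L2 M V"
  shows "L2_norm M (V x) \<le> opnorm_V M V * norm x"
proof -
  obtain K where K: "\<And>x. L2_norm M (V x) \<le> K * norm x"
    using V unfolding bounded_linear_L2_def by blast
  have bdd: "bdd_above {L2_norm M (V x) | x. norm x \<le> 1}"
  proof (rule bdd_aboveI)
    fix y assume "y \<in> {L2_norm M (V x) | x. norm x \<le> 1}"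
    then obtain x where "y = L2_norm M (V x)" "norm x \<le> 1" by blast
    with K[of x] show "y \<le> \<bar>K\<bar>"
      by (smt (verit) mult_left_le abs_ge_self mult_right_mono norm_ge_zero)
  qed
  show ?thesis
  proof (cases "x = 0")
    case True
    then show ?thesis using L2_norm_V_scaleR[OF V, of 0 x] by simp
  next
    case False
    have "L2_norm M (V x) / norm x = L2_norm M (V ((1 / norm x) *\<^sub>R x))"
      by (simp add: L2_norm_V_scaleR[OF V])
    also have "\<dots> \<le> opnorm_V M V"
      unfolding opnorm_V_def by (rule cSup_upper[OF _ bdd]) auto
    finally show ?thesis using False by (simp add: divide_le_eq mult.commute)
  qed
qed

lemma norm_W_le_opnorm:
  assumes W: "inverse_L2 M V W" and f: "sq_int M f"
  shows "norm (W f) \<le> opnorm_W M W * L2_norm M f"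
proof -
  have W_cmult: "\<And>c g. sq_int M g \<Longrightarrow> W (\<lambda>w. c * g w) = c *\<^sub>R W g"
    using W unfolding inverse_L2_def by blast
  obtain K where K: "\<And>g. sq_int M g \<Longrightarrow> norm (W g) \<le> K * L2_norm M g"
    using W unfolding inverse_L2_def by blast
  have bdd: "bdd_above {norm (W g) | g. sq_int M g \<and> L2_norm M g \<le> 1}"
  proof (rule bdd_aboveI)
    fix y assume "y \<in> {norm (W g) | g. sq_int M g \<and> L2_norm M g \<le> 1}"
    then obtain g where "y = norm (W g)" "sq_int M g" "L2_norm M g \<le> 1" by blast
    with K[of g] L2_norm_nonneg[of M g] show "y \<le> \<bar>K\<bar>"
      by (smt (verit) mult_left_le abs_ge_self mult_right_mono)
  qed
  show ?thesis
  proof (cases "L2_norm M f = 0")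
    case True
    have "AE w in M. f w = 0 * f w"
      using L2_norm_eq_0_imp_AE_zero[OF f True] by simp
    then have "W f = W (\<lambda>w. 0 * f w)"
      using W f sq_int_cmult[OF f] unfolding inverse_L2_def by blast
    also have "\<dots> = 0" using W_cmult[OF f, of 0] by (simp only: scale_zero_left)
    finally show ?thesis using True by simp
  next
    case False
    then have pos: "0 < L2_norm M f" using L2_norm_nonneg[of M f] by simp
    define g where "g w = (1 / L2_norm M f) * f w" for w
    have g: "sq_int M g" "L2_norm M g = 1"
      unfolding g_def L2_norm_cmult using pos by (simp_all only: sq_int_cmult[OF f]) simp
    have "norm (W f) / L2_norm M f = norm (W g)"
      using pos unfolding g_def by (subst W_cmult[OF f]) simp
    also have "\<dots> \<le> opnorm_W M W"
      unfolding opnorm_W_def using g by (intro cSup_upper[OF _ bdd]) auto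
    finally show ?thesis using pos by (simp add: divide_le_eq mult.commute)
  qed
qed

subsection \<open>Distance induced by a constant metric tensor\<close>

locale metric_tensor =
  fixes G :: "'a::real_inner \<Rightarrow> 'a"
  assumes linear_G: "linear G"
    and symmetric: "inner (G u) v = inner (G v) u"
    and nonneg: "0 \<le> inner (G v) v"
    and bounded: "\<exists>K. \<forall>v. inner (G v) v \<le> K * (norm v)\<^sup>2"
begin

lemma quadratic_add:
  "inner (G (a + b)) (a + b) = inner (G a) a + 2 * inner (G a) b + inner (G b) b"
  using symmetric[of b a] by (simp add: linear_add[OF linear_G] inner_add_left inner_add_right)

lemma quadratic_lincomb:
  "inner (G (c *\<^sub>R a + d *\<^sub>R b)) (c *\<^sub>R a + d *\<^sub>R b)
     = c\<^sup>2 * inner (G a) a + 2 * c * d * inner (G a) b + d\<^sup>2 * inner (G b) b"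
  unfolding quadratic_add by (simp add: linear_scale[OF linear_G] power2_eq_square)

lemma isCont_quadratic: "isCont (\<lambda>v. inner (G v) v) v0"
proof -
  obtain K where K: "\<And>v. inner (G v) v \<le> K * (norm v)\<^sup>2"
    using bounded by blast
  have expand: "inner (G u) u
      = inner (G v0) v0 + 2 * inner (G v0) (u - v0) + inner (G (u - v0)) (u - v0)" for u
    using quadratic_add[of v0 "u - v0"] by simp
  have "((\<lambda>u. inner (G (u - v0)) (u - v0)) \<longlongrightarrow> 0) (at v0)"
  proof (rule tendsto_sandwich)
    show "\<forall>\<^sub>F u in at v0. 0 \<le> inner (G (u - v0)) (u - v0)"
      using nonneg by simp
    show "\<forall>\<^sub>F u in at v0. inner (G (u - v0)) (u - v0) \<le> K * (norm (u - v0))\<^sup>2"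
      using K by simp
    have "((\<lambda>u. K * (norm (u - v0))\<^sup>2) \<longlongrightarrow> K * (norm (v0 - v0))\<^sup>2) (at v0)"
      by (intro tendsto_intros)
    then show "((\<lambda>u. K * (norm (u - v0))\<^sup>2) \<longlongrightarrow> 0) (at v0)" by simp
  qed (rule tendsto_const)
  moreover have "((\<lambda>u. inner (G v0) (u - v0)) \<longlongrightarrow> inner (G v0) (v0 - v0)) (at v0)"
    by (intro tendsto_intros)
  ultimately have "((\<lambda>u. inner (G v0) v0 + 2 * inner (G v0) (u - v0) + inner (G (u - v0)) (u - v0))
      \<longlongrightarrow> inner (G v0) v0 + 2 * inner (G v0) (v0 - v0) + 0) (at v0)"
    by (intro tendsto_intros)
  then show ?thesis
    unfolding isCont_def expand[symmetric] by simp
qed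

lemma energy_ge_quadratic:
  assumes "\<gamma> \<in> C1_curves x1 x2"
  shows "inner (G (x2 - x1)) (x2 - x1) \<le> energy G \<gamma>"
proof -
  define e where "e = x2 - x1"
  obtain \<gamma>' where \<gamma>': "\<And>s. s \<in> {0..1} \<Longrightarrow> (\<gamma> has_vector_derivative \<gamma>' s) (at s within {0..1})"
    and cont: "continuous_on {0..1} \<gamma>'" and ends: "\<gamma> 0 = x1" "\<gamma> 1 = x2"
    using assms unfolding C1_curves_def by blast
  have "vector_derivative \<gamma> (at s within {0..1}) = \<gamma>' s" if "s \<in> {0..1}" for s
    using vector_derivative_within_cbox[of 0 1 s \<gamma> "\<gamma>' s"] \<gamma>'[OF that] that by simp
  then have energy: "energy G \<gamma> = integral {0..1} (\<lambda>s. inner (G (\<gamma>' s)) (\<gamma>' s))"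
    unfolding energy_def by (intro Henstock_Kurzweil_Integration.integral_cong) simp
  have "((\<lambda>s. inner (\<gamma>' s) (G e)) has_integral inner (\<gamma> 1) (G e) - inner (\<gamma> 0) (G e)) {0..1}"
    by (intro fundamental_theorem_of_calculus
        bounded_linear.has_vector_derivative[OF bounded_linear_inner_left \<gamma>']) auto
  then have "((\<lambda>s. inner (\<gamma>' s) (G e)) has_integral inner (G e) e) {0..1}"
    using ends unfolding e_def by (simp add: inner_diff_left inner_commute)
  from has_integral_diff[OF has_integral_mult_right[OF this, of 2]
      has_integral_const_real[of "inner (G e) e" 0 1]]
  have lower: "((\<lambda>s. 2 * inner (\<gamma>' s) (G e) - inner (G e) e) has_integral inner (G e) e) {0..1}"
    by simp
  have "(\<lambda>s. inner (G (\<gamma>' s)) (\<gamma>' s)) integrable_on {0..1}"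
    by (intro integrable_continuous_interval
        continuous_on_compose2[OF continuous_at_imp_continuous_on[of UNIV] cont])
      (auto intro: isCont_quadratic)
  moreover have "2 * inner (\<gamma>' s) (G e) - inner (G e) e \<le> inner (G (\<gamma>' s)) (\<gamma>' s)" for s
  proof -
    have "0 \<le> inner (G (\<gamma>' s - e)) (\<gamma>' s - e)"
      by (rule nonneg)
    also have "\<dots> = inner (G (\<gamma>' s)) (\<gamma>' s) - 2 * inner (G (\<gamma>' s)) e + inner (G e) e"
      using quadratic_lincomb[of 1 "\<gamma>' s" "- 1" e] by simp
    also have "inner (G (\<gamma>' s)) e = inner (\<gamma>' s) (G e)"
      by (metis symmetric inner_commute)
    finally show ?thesis by simp
  qed
  ultimately show ?thesis
    unfolding energy e_def[symmetric] by (intro has_integral_le[OF lower]) auto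
qed

lemma G_dist_eq: "G_dist G x1 x2 = sqrt (inner (G (x2 - x1)) (x2 - x1))"
proof -
  define e where "e = x2 - x1"
  define l where "l s = x1 + s *\<^sub>R e" for s :: real
  have l': "(l has_vector_derivative e) (at s within {0..1})" for s
    unfolding l_def by (auto intro!: derivative_eq_intros)
  have "vector_derivative l (at s within {0..1}) = e" if "s \<in> {0..1}" for s
    using vector_derivative_within_cbox[of 0 1 s l e] l' that by simp
  then have "energy G l = integral {0..1} (\<lambda>s::real. inner (G e) e)"
    unfolding energy_def by (intro Henstock_Kurzweil_Integration.integral_cong) simp
  then have "energy G l = inner (G e) e"
    by simp
  moreover have "l \<in> C1_curves x1 x2"
    unfolding C1_curves_def using l' by (auto simp: l_def e_def intro!: exI[of _ "\<lambda>s. e"])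
  ultimately have "Inf (energy G ` C1_curves x1 x2) = inner (G e) e"
    using energy_ge_quadratic unfolding e_def by (intro cInf_eq_minimum) (force, auto)
  then show ?thesis unfolding G_dist_def e_def by simp
qed

lemma cs_geodesic_is_segment:
  assumes definite: "\<And>v. inner (G v) v = 0 \<Longrightarrow> v = 0"
    and geodesic: "cs_geodesic (G_dist G) \<gamma>" and \<theta>: "\<theta> \<in> {0..1}"
  shows "\<gamma> \<theta> = (1 - \<theta>) *\<^sub>R \<gamma> 0 + \<theta> *\<^sub>R \<gamma> 1"
proof -
  define a where "a = \<gamma> \<theta> - \<gamma> 0"
  define b where "b = \<gamma> 1 - \<gamma> \<theta>"
  define D where "D = G_dist G (\<gamma> 0) (\<gamma> 1)"
  have square: "inner (G v) v = t\<^sup>2" if "sqrt (inner (G v) v) = t" for v t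
    using that nonneg[of v] by (metis real_sqrt_pow2)
  have Qa: "inner (G a) a = (\<theta> * D)\<^sup>2"
    using geodesic \<theta> unfolding cs_geodesic_def a_def D_def
    by (intro square) (metis G_dist_eq abs_of_nonneg atLeastAtMost_iff diff_zero order_refl zero_le_one)
  moreover have Qb: "inner (G b) b = ((1 - \<theta>) * D)\<^sup>2"
    using geodesic \<theta> unfolding cs_geodesic_def b_def D_def
    by (intro square) (metis G_dist_eq abs_of_nonneg atLeastAtMost_iff diff_ge_0_iff_ge order_refl zero_le_one)
  moreover have "inner (G (a + b)) (a + b) = D\<^sup>2"
    unfolding a_def b_def D_def by (intro square) (simp add: G_dist_eq)
  ultimately have cross: "inner (G a) b = \<theta> * (1 - \<theta>) * D\<^sup>2"
    unfolding quadratic_add by (simp add: algebra_simps power2_eq_square)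
  \<comment> \<open>equality case of the triangle inequality for the norm sqrt (inner (G v) v)\<close>
  have "inner (G ((1 - \<theta>) *\<^sub>R a + (- \<theta>) *\<^sub>R b)) ((1 - \<theta>) *\<^sub>R a + (- \<theta>) *\<^sub>R b) = 0"
    unfolding quadratic_lincomb cross Qa Qb
    by (simp add: algebra_simps power2_eq_square)
  then have "(1 - \<theta>) *\<^sub>R a + (- \<theta>) *\<^sub>R b = 0"
    by (rule definite)
  then show ?thesis
    unfolding a_def b_def by (simp add: algebra_simps)
qed

end

lemma gram_eq_L2_norm:
  assumes "\<And>v u. inner (G v) u = L2_inner M (V v) (V u)"
  shows "inner (G v) v = (L2_norm M (V v))\<^sup>2"
  unfolding assms L2_inner_def L2_norm_def
  by (simp add: power2_eq_square[symmetric] Bochner_Integration.integral_nonneg)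

lemma gram_le_opnorm_V:
  assumes "bounded_linear_L2 M V" and "\<And>v u. inner (G v) u = L2_inner M (V v) (V u)"
  shows "inner (G v) v \<le> (opnorm_V M V)\<^sup>2 * (norm v)\<^sup>2"
  unfolding gram_eq_L2_norm[OF assms(2)] power_mult_distrib[symmetric]
  using L2_norm_V_le_opnorm[OF assms(1)] L2_norm_nonneg by (intro power_mono) auto

lemma norm_le_opnorm_W_gram:
  assumes "bounded_linear_L2 M V" and "inverse_L2 M V W"
    and "\<And>v u. inner (G v) u = L2_inner M (V v) (V u)"
  shows "(norm v)\<^sup>2 \<le> (opnorm_W M W)\<^sup>2 * inner (G v) v"
proof -
  have "norm v = norm (W (V v))"
    using assms(2) unfolding inverse_L2_def by simp
  also have "\<dots> \<le> opnorm_W M W * L2_norm M (V v)"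
    by (rule norm_W_le_opnorm[OF assms(2) bounded_linear_L2_sq_int[OF assms(1)]])
  finally show ?thesis
    unfolding gram_eq_L2_norm[OF assms(3)] power_mult_distrib[symmetric]
    by (intro power_mono) auto
qed

lemma metric_tensor_of_L2:
  fixes V :: "'a::real_inner \<Rightarrow> 'w \<Rightarrow> real"
  assumes V: "bounded_linear_L2 M V"
    and G: "\<And>v u. inner (G v) u = L2_inner M (V v) (V u)"
  shows "metric_tensor G"
proof (rule metric_tensor.intro)
  have sq: "\<And>x. sq_int M (V x)"
    using V by (rule bounded_linear_L2_sq_int)
  have add: "\<And>x y w. w \<in> space M \<Longrightarrow> V (x + y) w = V x w + V y w"
   and scale: "\<And>c x w. w \<in> space M \<Longrightarrow> V (c *\<^sub>R x) w = c * V x w"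
    using V unfolding bounded_linear_L2_def by auto
  have "inner (G (x + y)) u = inner (G x + G y) u" for x y u
  proof -
    have "inner (G (x + y)) u = (\<integral>w. V x w * V u w + V y w * V u w \<partial>M)"
      unfolding G L2_inner_def
      by (rule Bochner_Integration.integral_cong) (auto simp: add algebra_simps)
    also have "\<dots> = (\<integral>w. V x w * V u w \<partial>M) + (\<integral>w. V y w * V u w \<partial>M)"
      by (intro Bochner_Integration.integral_add sq_int_integrable_mult sq)
    finally show ?thesis by (simp add: inner_add_left G L2_inner_def)
  qed
  moreover have "inner (G (c *\<^sub>R x)) u = inner (c *\<^sub>R G x) u" for c x u
  proof -
    have "inner (G (c *\<^sub>R x)) u = (\<integral>w. c * (V x w * V u w) \<partial>M)"
      unfolding G L2_inner_def
      by (rule Bochner_Integration.integral_cong) (auto simp: scale algebra_simps)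
    then show ?thesis by (simp add: G L2_inner_def)
  qed
  ultimately show "linear G"
    by (intro linearI) (metis inner_diff_left inner_eq_zero_iff right_minus_eq)+
  show "inner (G u) v = inner (G v) u" for u v
    unfolding G L2_inner_def by (simp add: mult.commute)
  show "0 \<le> inner (G v) v" for v
    unfolding gram_eq_L2_norm[OF G] by simp
  show "\<exists>K. \<forall>v. inner (G v) v \<le> K * (norm v)\<^sup>2"
    using gram_le_opnorm_V[OF V G] by blast
qed

subsection \<open>From convexity along segments to geodesic convexity\<close>

lemma geod_lambda_convex_if_geodesics_are_segments:
  fixes d :: "'a::real_normed_vector \<Rightarrow> 'a \<Rightarrow> real" and F :: "'a \<Rightarrow> real"
  assumes convex: "lambda_convex lt F"
    and segment: "\<And>\<gamma> \<theta>. cs_geodesic d \<gamma> \<Longrightarrow> \<theta> \<in> {0..1}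
                     \<Longrightarrow> \<gamma> \<theta> = (1 - \<theta>) *\<^sub>R \<gamma> 0 + \<theta> *\<^sub>R \<gamma> 1"
    and modulus: "\<And>x y. l * (d x y)\<^sup>2 \<le> lt * (norm (x - y))\<^sup>2"
  shows "geod_lambda_convex d l F"
  unfolding geod_lambda_convex_def
proof (intro allI impI ballI)
  fix \<gamma> :: "real \<Rightarrow> 'a" and \<theta> :: real
  assume \<gamma>: "cs_geodesic d \<gamma>" and \<theta>: "\<theta> \<in> {0..1}"
  have "F (\<gamma> \<theta>) \<le> (1 - \<theta>) * F (\<gamma> 0) + \<theta> * F (\<gamma> 1)
      - lt * \<theta> * (1 - \<theta>) / 2 * (norm (\<gamma> 0 - \<gamma> 1))\<^sup>2"
    using convex \<theta> unfolding lambda_convex_def segment[OF \<gamma> \<theta>] by blast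
  moreover have "\<theta> * (1 - \<theta>) / 2 * (l * (d (\<gamma> 0) (\<gamma> 1))\<^sup>2)
      \<le> \<theta> * (1 - \<theta>) / 2 * (lt * (norm (\<gamma> 0 - \<gamma> 1))\<^sup>2)"
    using \<theta> by (intro mult_left_mono modulus) auto
  moreover have "l * \<theta> * (1 - \<theta>) / 2 * (d (\<gamma> 0) (\<gamma> 1))\<^sup>2
      = \<theta> * (1 - \<theta>) / 2 * (l * (d (\<gamma> 0) (\<gamma> 1))\<^sup>2)"
    and "lt * \<theta> * (1 - \<theta>) / 2 * (norm (\<gamma> 0 - \<gamma> 1))\<^sup>2
      = \<theta> * (1 - \<theta>) / 2 * (lt * (norm (\<gamma> 0 - \<gamma> 1))\<^sup>2)"
    by simp_all
  ultimately show "F (\<gamma> \<theta>) \<le> (1 - \<theta>) * F (\<gamma> 0) + \<theta> * F (\<gamma> 1)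
      - l * \<theta> * (1 - \<theta>) / 2 * (d (\<gamma> 0) (\<gamma> 1))\<^sup>2"
    by linarith
qed

lemma convexity_modulus_le:
  fixes a b q n lt :: real
  assumes "0 \<le> q" "0 \<le> n" "q \<le> a\<^sup>2 * n" "n \<le> b\<^sup>2 * q"
  shows "(if lt > 0 then lt / a\<^sup>2 else lt * b\<^sup>2) * q \<le> lt * n"
proof (cases "lt > 0")
  case True
  then have "lt * (q / a\<^sup>2) \<le> lt * n"
    using assms by (intro mult_left_mono) (auto simp: divide_le_eq mult.commute)
  then show ?thesis using True by simp
next
  case False
  then show ?thesis
    using mult_left_mono_neg[OF assms(4), of lt] by (simp add: mult.assoc)
qed

theorem mainTheorem4:
  fixes M :: "'w measure"
    and V :: "'a::{real_inner, complete_space} \<Rightarrow> 'w \<Rightarrow> real"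
    and W :: "('w \<Rightarrow> real) \<Rightarrow> 'a"
    and G :: "'a \<Rightarrow> 'a"
    and F :: "'a \<Rightarrow> real"
    and lt :: real
  assumes "separable_space (euclidean :: 'a topology)"
    and "bounded_linear_L2 M V"
    and "inverse_L2 M V W"
    and "\<And>v u. inner (G v) u = L2_inner M (V v) (V u)"
    and "lambda_convex lt F"
  shows "geod_lambda_convex (G_dist G)
           (if lt > 0 then lt / (opnorm_V M V)\<^sup>2 else lt * (opnorm_W M W)\<^sup>2) F"
proof -
  interpret metric_tensor G
    by (rule metric_tensor_of_L2[OF assms(2,4)])
  note upper = gram_le_opnorm_V[OF assms(2,4)]
    and lower = norm_le_opnorm_W_gram[OF assms(2-4)]
  show ?thesis
  proof (rule geod_lambda_convex_if_geodesics_are_segments[OF assms(5)])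
    have "inner (G v) v = 0 \<Longrightarrow> v = 0" for v
      using lower[of v] by simp
    then show "\<gamma> \<theta> = (1 - \<theta>) *\<^sub>R \<gamma> 0 + \<theta> *\<^sub>R \<gamma> 1"
      if "cs_geodesic (G_dist G) \<gamma>" "\<theta> \<in> {0..1}" for \<gamma> \<theta>
      using cs_geodesic_is_segment that by blast
    show "(if lt > 0 then lt / (opnorm_V M V)\<^sup>2 else lt * (opnorm_W M W)\<^sup>2) * (G_dist G x y)\<^sup>2
        \<le> lt * (norm (x - y))\<^sup>2" for x y
      unfolding G_dist_eq real_sqrt_pow2[OF nonneg] norm_minus_commute[of x y]
      using upper lower nonneg by (intro convexity_modulus_le) auto
  qed
qed

end
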